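(* Let $\mathbf u$ be an infinite word over a finite alphabet whose language is closed under reversal. Suppose that both the defect $D(\mathbf u)$ and the sum $\sum_{n=0}^{+\infty}T_{\mathbf u}(n)$ are finite. Then $$2D(\mathbf u)=\sum_{n=0}^{+\infty}T_{\mathbf u}(n).$$
   Context: For a finite word $w=w_0\cdots w_{n-1}$ its reversal is $\overline{w}=w_{n-1}\cdots w_0$; $w$ is a palindrome if $w=\overline{w}$ (the empty word is a palindrome). The language $\mathcal L(\mathbf u)$ is the set of all finite factors of $\mathbf u$, and $\mathcal L_n(\mathbf u)$ those of length $n$; the language is closed under reversal if $w\in\mathcal L(\mathbf u)$ implies $\overline w\in\mathcal L(\mathbf u)$. The factor complexity is $\mathcal C_{\mathbf u}(n)=\#\mathcal L_n(\mathbf u)$ and the palindromic complexity $\mathcal P_{\mathbf u}(n)$ is the number of palindromes in $\mathcal L_n(\mathbf u)$. Define $T_{\mathbf u}(n)=\mathcal C_{\mathbf u}(n+1)-\mathcal C_{\mathbf u}(n)+2-\mathcal P_{\mathbf u}(n+1)-\mathcal P_{\mathbf u}(n)$. The defect of a finite word $w$ is $D(w)=|w|+1-(\text{number of distinct palindromic factors of } w, \text{ including the empty word})$. The defect of an infinite word is $D(\mathbf u)=\sup\{D(w): w \text{ a prefix of } \mathbf u\}$ (possibly $+\infty$). *)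

theory Defs
  imports Complex_Main "HOL-Library.Extended_Nat"
begin

definition factor_of :: "(nat \<Rightarrow> 'a) \<Rightarrow> nat \<Rightarrow> nat \<Rightarrow> 'a list" where
  "factor_of u i n = map u [i..<i+n]"

definition lang :: "(nat \<Rightarrow> 'a) \<Rightarrow> 'a list set" where
  "lang u = {w. \<exists>i. w = factor_of u i (length w)}"

definition lang_n :: "(nat \<Rightarrow> 'a) \<Rightarrow> nat \<Rightarrow> 'a list set" where
  "lang_n u n = {w \<in> lang u. length w = n}"

definition closed_under_reversal :: "(nat \<Rightarrow> 'a) \<Rightarrow> bool" where
  "closed_under_reversal u \<longleftrightarrow> (\<forall>w \<in> lang u. rev w \<in> lang u)"

definition is_palindrome :: "'a list \<Rightarrow> bool" where
  "is_palindrome w \<longleftrightarrow> rev w = w"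

definition factor_complexity :: "(nat \<Rightarrow> 'a) \<Rightarrow> nat \<Rightarrow> nat" where
  "factor_complexity u n = card (lang_n u n)"

definition pal_complexity :: "(nat \<Rightarrow> 'a) \<Rightarrow> nat \<Rightarrow> nat" where
  "pal_complexity u n = card {w \<in> lang_n u n. is_palindrome w}"

definition T_fun :: "(nat \<Rightarrow> 'a) \<Rightarrow> nat \<Rightarrow> int" where
  "T_fun u n = int (factor_complexity u (Suc n)) - int (factor_complexity u n) + 2
              - int (pal_complexity u (Suc n)) - int (pal_complexity u n)"

definition list_factors :: "'a list \<Rightarrow> 'a list set" where
  "list_factors w = {take j (drop i w) | i j. True}"

definition defect_word :: "'a list \<Rightarrow> int" where
  "defect_word w = int (length w) + 1 - int (card {p \<in> list_factors w. is_palindrome p})"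

text \<open>Defect of an infinite word: supremum over prefixes, possibly infinite.
  Since every finite word has nonnegative defect, the supremum is taken in enat
  of the (nonnegative) prefix defects.\<close>
definition defect :: "(nat \<Rightarrow> 'a) \<Rightarrow> enat" where
  "defect u = (SUP n. enat (nat (defect_word (map u [0..<n]))))"

end

theory Submission
  imports Defs "HOL-Library.Sublist"
begin

text \<open>Finite defect makes every factor of \<open>u\<close> a factor of a palindromic factor of \<open>u\<close>: at a late
  occurrence, ending where the defect of the prefixes no longer grows, the appended letter creates
  a new palindromic suffix, and it must contain the factor. For a palindrome \<open>w\<close> the word-level
  quantities \<open>T\<^sub>w(n)\<close> telescope to \<open>\<Sum>n<|w|. T\<^sub>w(n) = 2 D(w)\<close>. Moreover \<open>T\<^sub>w(n)\<close> is twice the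
  cyclomatic excess of the graph whose vertices are the reversal classes of factors of length \<open>n\<close>
  and whose edges are the classes of non-palindromic factors of length \<open>n + 1\<close>; this graph is
  connected, so the excess is nonnegative and can only grow when \<open>w\<close> is enlarged to a longer
  palindrome. Palindromic factors containing all factors of \<open>u\<close> up to a given length, or a prefix
  of maximal defect, then bound the partial sums of \<open>T\<^sub>u\<close> by \<open>2 D(u)\<close> from above and below.\<close>

section \<open>Defect of finite words\<close>

lemma list_factors_eq: "list_factors w = {x. sublist x w}"
proof (intro set_eqI iffI)
  fix x assume "x \<in> list_factors w"
  then show "x \<in> {x. sublist x w}"
    by (auto simp: list_factors_def intro: sublist_order.order_trans[OF sublist_take sublist_drop])
next
  fix x assume "x \<in> {x. sublist x w}"
  then obtain ps ss where "w = ps @ x @ ss" by (auto simp: sublist_def)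
  then have "x = take (length x) (drop (length ps) w)" by simp
  then show "x \<in> list_factors w" by (auto simp: list_factors_def)
qed

lemma finite_sublists: "finite {x. sublist x w}"
  by (metis List.finite_set set_sublists_eq)

lemma is_palindrome_rev [simp]: "is_palindrome (rev p) = is_palindrome p"
  unfolding is_palindrome_def by auto

definition pal_factors :: "'a list \<Rightarrow> 'a list set" where
  "pal_factors w = {p. sublist p w \<and> is_palindrome p}"

lemma finite_pal_factors: "finite (pal_factors w)"
  unfolding pal_factors_def using finite_sublists[of w] by (rule rev_finite_subset) auto

lemma defect_word_eq: "defect_word w = int (length w) + 1 - int (card (pal_factors w))"
  unfolding defect_word_def pal_factors_def list_factors_eq by simp

lemma pal_factors_rev: "pal_factors (rev w) = rev ` pal_factors w"
  unfolding pal_factors_def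
  by (auto simp: sublist_rev_right image_iff) (metis is_palindrome_rev rev_rev_ident)

lemma defect_word_rev [simp]: "defect_word (rev w) = defect_word w"
  unfolding defect_word_eq pal_factors_rev by (simp add: card_image)

lemma sublist_butlast_if_pal_proper_suffix:
  assumes "suffix p q" "p \<noteq> q" "is_palindrome p" "is_palindrome q"
  shows "sublist p (butlast q)"
proof -
  obtain r where "q = r @ p" "r \<noteq> []" using assms(1,2) by (auto simp: suffix_def)
  then have "q = p @ rev r" using assms(3,4) by (metis is_palindrome_def rev_append)
  with \<open>r \<noteq> []\<close> show ?thesis by (simp add: butlast_append)
qed

definition new_pals :: "'a list \<Rightarrow> 'a \<Rightarrow> 'a list set" where
  "new_pals v a = pal_factors (v @ [a]) - pal_factors v"

text \<open>Of two new palindromic suffixes, the shorter one would already occur in the longer one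
  with its last letter removed, i.e. in \<open>v\<close>.\<close>
lemma card_new_pals_le_1: "card (new_pals v a) \<le> 1"
proof -
  have suffix: "suffix p (v @ [a])" if "p \<in> new_pals v a" for p
    using that sublist_snoc[of p v a] by (auto simp: new_pals_def pal_factors_def)
  have nested: False if "p \<in> new_pals v a" "q \<in> new_pals v a" "suffix p q" "p \<noteq> q" for p q
  proof -
    have "sublist p (butlast q)"
      using that by (intro sublist_butlast_if_pal_proper_suffix) (auto simp: new_pals_def pal_factors_def)
    moreover have "suffix (butlast q) v"
      using suffix[OF that(2)] by (cases q rule: rev_cases) (auto simp: suffix_def)
    ultimately have "sublist p v"
      using sublist_order.order_trans by blast
    with that(1) show False by (simp add: new_pals_def pal_factors_def)
  qed
  have "p = q" if "p \<in> new_pals v a" "q \<in> new_pals v a" for p q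
    using suffix_same_cases[OF suffix suffix] nested that by metis
  moreover have "finite (new_pals v a)"
    by (simp add: new_pals_def finite_pal_factors)
  ultimately show ?thesis
    by (simp add: card_le_Suc0_iff_eq)
qed

lemma defect_word_snoc:
  "defect_word (v @ [a]) = defect_word v + 1 - int (card (new_pals v a))"
proof -
  have "pal_factors v \<subseteq> pal_factors (v @ [a])"
    by (auto simp: pal_factors_def intro: sublist_order.order_trans)
  then have "card (pal_factors (v @ [a])) = card (pal_factors v) + card (new_pals v a)"
    unfolding new_pals_def using finite_pal_factors
    by (metis card_Diff_subset card_mono le_add_diff_inverse)
  then show ?thesis by (simp add: defect_word_eq)
qed

lemma defect_word_snoc_mono: "defect_word v \<le> defect_word (v @ [a])"
  using defect_word_snoc[of v a] card_new_pals_le_1[of v a] by linarith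

lemma new_pal_suffix_if_defect_word_snoc_eq:
  assumes "defect_word (v @ [a]) = defect_word v"
  obtains p where "is_palindrome p" "suffix p (v @ [a])" "\<not> sublist p v"
proof -
  have "new_pals v a \<noteq> {}"
    using assms defect_word_snoc[of v a] by auto
  then obtain p where "p \<in> new_pals v a" by blast
  then show ?thesis
    using that sublist_snoc[of p v a] by (auto simp: new_pals_def pal_factors_def)
qed

lemma defect_word_append_right: "defect_word v \<le> defect_word (v @ s)"
proof (induction s rule: rev_induct)
  case (snoc a s)
  then show ?case using defect_word_snoc_mono[of "v @ s" a] by simp
qed simp

lemma defect_word_sublist_mono:
  assumes "sublist x y"
  shows "defect_word x \<le> defect_word y"
proof -
  obtain p s where y: "y = p @ x @ s" using assms by (auto simp: sublist_def)
  have "defect_word x \<le> defect_word (x @ s)"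
    by (rule defect_word_append_right)
  also have "\<dots> = defect_word (rev (x @ s))"
    by (simp only: defect_word_rev)
  also have "\<dots> \<le> defect_word (rev (x @ s) @ rev p)"
    by (rule defect_word_append_right)
  also have "\<dots> = defect_word y"
    using y by (metis defect_word_rev append_assoc rev_append)
  finally show ?thesis .
qed

lemma defect_word_Nil [simp]: "defect_word [] = 0"
proof -
  have "pal_factors ([] :: 'a list) = {[]}"
    by (auto simp: pal_factors_def is_palindrome_def)
  then show ?thesis unfolding defect_word_eq by simp
qed

lemma defect_word_nonneg: "0 \<le> defect_word w"
  using defect_word_sublist_mono[of "[]" w] by simp

section \<open>Factors of an infinite word\<close>

abbreviation pref :: "(nat \<Rightarrow> 'a) \<Rightarrow> nat \<Rightarrow> 'a list" where
  "pref u m \<equiv> map u [0..<m]"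

lemma pref_add: "pref u (m + k) = pref u m @ factor_of u m k"
  by (simp add: factor_of_def upt_add_eq_append[of 0 m])

lemma take_pref: "take k (pref u m) = pref u (min k m)"
  by (cases "k \<le> m") (simp_all add: take_map take_upt min_def)

lemma prefix_pref_mono: "m \<le> m' \<Longrightarrow> prefix (pref u m) (pref u m')"
  by (metis min.absorb1 take_is_prefix take_pref)

lemma lang_iff_suffix_of_pref: "x \<in> lang u \<longleftrightarrow> (\<exists>y. pref u (length y + length x) = y @ x)"
proof
  assume "x \<in> lang u"
  then obtain i where "x = factor_of u i (length x)" by (auto simp: lang_def)
  then have "pref u (length (pref u i) + length x) = pref u i @ x"
    by (simp add: pref_add)
  then show "\<exists>y. pref u (length y + length x) = y @ x" ..
next
  assume "\<exists>y. pref u (length y + length x) = y @ x"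
  then obtain y where "pref u (length y + length x) = y @ x" ..
  then have "x = factor_of u (length y) (length x)"
    by (simp add: pref_add)
  then show "x \<in> lang u" by (auto simp: lang_def)
qed

lemma lang_iff_sublist_pref: "x \<in> lang u \<longleftrightarrow> (\<exists>m. sublist x (pref u m))"
proof
  assume "x \<in> lang u"
  then show "\<exists>m. sublist x (pref u m)"
    unfolding lang_iff_suffix_of_pref by (metis sublist_append_leftI)
next
  assume "\<exists>m. sublist x (pref u m)"
  then obtain m y z where "pref u m = y @ x @ z" by (auto simp: sublist_def)
  moreover from this have "length y + length x \<le> m"
    by (metis length_append le_add1 length_map length_upt diff_zero add.assoc)
  ultimately have "pref u (length y + length x) = y @ x"
    by (metis take_pref min.absorb1 append.assoc append_take_drop_id append_eq_conv_conj length_append)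
  then show "x \<in> lang u" unfolding lang_iff_suffix_of_pref ..
qed

lemma pref_in_lang: "pref u m \<in> lang u"
  unfolding lang_iff_sublist_pref by blast

lemma sublist_in_lang: "sublist x y \<Longrightarrow> y \<in> lang u \<Longrightarrow> x \<in> lang u"
  unfolding lang_iff_sublist_pref using sublist_order.order_trans by blast

lemma finite_lang_n: "finite (lang_n (u :: nat \<Rightarrow> 'a::finite) k)"
  by (rule finite_subset[OF _ finite_lists_length_eq[of UNIV k]]) (auto simp: lang_n_def)

lemma finite_subset_lang_in_pref:
  assumes "finite S" "S \<subseteq> lang u"
  shows "\<exists>m. \<forall>x\<in>S. sublist x (pref u m)"
  using assms
proof (induction S rule: finite_induct)
  case (insert x S)
  then obtain m m' where "\<forall>y\<in>S. sublist y (pref u m)" "sublist x (pref u m')"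
    using lang_iff_sublist_pref by (metis insert_subset)
  then have "\<forall>y\<in>insert x S. sublist y (pref u (max m m'))"
    using prefix_pref_mono[of m "max m m'" u] prefix_pref_mono[of m' "max m m'" u]
    by (metis insert_iff max.cobounded1 max.cobounded2 prefix_imp_sublist sublist_order.order_trans)
  then show ?case ..
qed simp

text \<open>Reversing a prefix \<open>a @ rev x @ b\<close> with \<open>length b = N\<close> gives the factor \<open>rev b @ x @ rev a\<close>.\<close>
lemma occurs_beyond_if_closed_under_reversal:
  assumes "closed_under_reversal u" "x \<in> lang u"
  shows "\<exists>y. N \<le> length y \<and> pref u (length y + length x) = y @ x"
proof -
  have "rev x \<in> lang u"
    using assms by (simp add: closed_under_reversal_def)
  then obtain a where a: "pref u (length a + length x) = a @ rev x"
    unfolding lang_iff_suffix_of_pref by auto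
  define b where "b = factor_of u (length a + length x) N"
  have "rev (pref u (length a + length x + N)) = (rev b @ x) @ rev a"
    using a by (simp add: pref_add b_def)
  moreover have "rev (pref u (length a + length x + N)) \<in> lang u"
    using assms(1) pref_in_lang by (auto simp: closed_under_reversal_def)
  ultimately have "rev b @ x \<in> lang u"
    by (metis sublist_append_rightI sublist_in_lang)
  then obtain c where "pref u (length c + length (rev b @ x)) = c @ rev b @ x"
    unfolding lang_iff_suffix_of_pref by blast
  then have "pref u (length (c @ rev b) + length x) = (c @ rev b) @ x"
    by (simp add: add.assoc)
  moreover have "N \<le> length (c @ rev b)"
    by (simp add: b_def factor_of_def)
  ultimately show ?thesis by blast
qed

lemma defect_attained:
  assumes "defect u \<noteq> \<infinity>"
  obtains N where "int (the_enat (defect u)) = defect_word (pref u N)"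
    and "\<And>m. defect_word (pref u m) \<le> defect_word (pref u N)"
proof -
  define R where "R = range (\<lambda>m. enat (nat (defect_word (pref u m))))"
  have "defect u = Sup R"
    by (simp add: defect_def R_def)
  then have "finite R"
    using assms by (auto simp: Sup_enat_def split: if_splits)
  then have "Sup R \<in> R" "\<forall>r\<in>R. r \<le> Sup R"
    by (auto simp: Sup_enat_def R_def intro: Max_in)
  then obtain N where "defect u = enat (nat (defect_word (pref u N)))"
    and "\<And>m. nat (defect_word (pref u m)) \<le> nat (defect_word (pref u N))"
    using \<open>defect u = Sup R\<close> by (auto simp: R_def)
  moreover have "0 \<le> defect_word (pref u m)" for m
    by (rule defect_word_nonneg)
  ultimately show ?thesis
    using that by (metis the_enat.simps int_nat_eq nat_le_eq_zle)
qed

lemma defect_word_le_defect: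
  assumes "defect u \<noteq> \<infinity>" "z \<in> lang u"
  shows "defect_word z \<le> int (the_enat (defect u))"
proof -
  obtain N where N: "int (the_enat (defect u)) = defect_word (pref u N)"
    and max: "\<And>m. defect_word (pref u m) \<le> defect_word (pref u N)"
    using defect_attained[OF assms(1)] by blast
  obtain m where "sublist z (pref u m)"
    using assms(2) lang_iff_sublist_pref by blast
  then show ?thesis
    using defect_word_sublist_mono max N by (metis order_trans)
qed

text \<open>Take a late occurrence of \<open>x\<close>, ending beyond the point where the prefix defect stops
  growing. Appending its last letter creates a new palindromic suffix, which cannot be a suffix
  of \<open>x\<close> because \<open>x\<close> occurred earlier; so it contains \<open>x\<close>.\<close>
lemma factor_in_pal_factor:
  assumes "closed_under_reversal u" "defect u \<noteq> \<infinity>" "x \<in> lang u"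
  obtains z where "is_palindrome z" "z \<in> lang u" "sublist x z"
proof -
  obtain N where max: "\<And>m. defect_word (pref u m) \<le> defect_word (pref u N)"
    using defect_attained[OF assms(2)] by blast
  obtain y0 where y0: "pref u (length y0 + length x) = y0 @ x"
    using assms(3) lang_iff_suffix_of_pref by blast
  obtain y where y: "N + length y0 + 1 \<le> length y" "pref u (length y + length x) = y @ x"
    using occurs_beyond_if_closed_under_reversal[OF assms(1,3)] by blast
  define M where "M = length y + length x - 1"
  have M: "Suc M = length y + length x" "N \<le> M" "length y0 + length x \<le> M"
    using y(1) by (auto simp: M_def)
  have "defect_word (pref u N) \<le> defect_word (pref u M)"
    using M(2) by (intro defect_word_sublist_mono prefix_imp_sublist prefix_pref_mono)
  then have "defect_word (pref u M @ [u M]) = defect_word (pref u M)"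
    using max[of "Suc M"] defect_word_snoc_mono[of "pref u M" "u M"] by simp
  then obtain p where p: "is_palindrome p" "suffix p (pref u M @ [u M])" "\<not> sublist p (pref u M)"
    by (rule new_pal_suffix_if_defect_word_snoc_eq)
  have x_suffix: "suffix x (pref u M @ [u M])"
    using y(2) M(1) by (metis upt_Suc_append map_append list.map zero_le suffix_def)
  show ?thesis
  proof (cases "length p \<le> length x")
    case True
    then have "suffix p x"
      using p(2) x_suffix suffix_length_suffix by blast
    moreover have "sublist x (pref u M)"
      using y0 prefix_pref_mono[OF M(3), of u]
      by (metis prefix_imp_sublist sublist_append_leftI sublist_order.order_trans)
    ultimately show ?thesis
      using p(3) by (meson suffix_imp_sublist sublist_order.order_trans)
  next
    case False
    then have "suffix x p"
      using p(2) x_suffix suffix_length_suffix by (metis nat_le_linear)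
    moreover have "p \<in> lang u"
      using p(2) pref_in_lang[of u "Suc M"] suffix_imp_sublist sublist_in_lang by fastforce
    ultimately show ?thesis
      using that p(1) by blast
  qed
qed

lemma finite_subset_lang_in_pal_factor:
  assumes "closed_under_reversal u" "defect u \<noteq> \<infinity>" "finite S" "S \<subseteq> lang u"
  obtains z where "is_palindrome z" "z \<in> lang u" "\<And>x. x \<in> S \<Longrightarrow> sublist x z"
proof -
  obtain m where "\<forall>x\<in>S. sublist x (pref u m)"
    using finite_subset_lang_in_pref[OF assms(3,4)] by blast
  moreover obtain z where "is_palindrome z" "z \<in> lang u" "sublist (pref u m) z"
    using factor_in_pal_factor[OF assms(1,2) pref_in_lang] by blast
  ultimately show ?thesis
    using that sublist_order.order_trans by blast
qed

section \<open>Reversal classes and the graph of a palindrome\<close>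

lemma card_add_card_fixpoints_involution:
  assumes "finite X" "\<And>x. x \<in> X \<Longrightarrow> f x \<in> X" "\<And>x. x \<in> X \<Longrightarrow> f (f x) = x"
  shows "card X + card {x\<in>X. f x = x} = 2 * card ((\<lambda>x. {x, f x}) ` X)"
proof -
  define Orb where "Orb = (\<lambda>x. {x, f x}) ` X"
  have "finite Orb" using assms(1) by (simp add: Orb_def)
  have same_orbit: "{z, f z} = {x, f x}" if "x \<in> X" "z \<in> {x, f x}" for x z
    using that assms(3) by auto
  have disjoint: "C \<inter> C' = {}" if "C \<in> Orb" "C' \<in> Orb" "C \<noteq> C'" for C C'
    using that same_orbit unfolding Orb_def by blast
  have "card X = card (\<Union>C\<in>Orb. C)"
    using assms(2) by (auto simp: Orb_def intro: arg_cong[where f = card])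
  also have "\<dots> = (\<Sum>C\<in>Orb. card C)"
    using \<open>finite Orb\<close> disjoint by (intro card_UN_disjoint) (auto simp: Orb_def)
  finally have "card X = (\<Sum>C\<in>Orb. card C)" .
  moreover have "card {x\<in>X. f x = x} = card (\<Union>C\<in>Orb. {x\<in>C. f x = x})"
    using assms(2) by (auto simp: Orb_def intro: arg_cong[where f = card])
  moreover have "\<dots> = (\<Sum>C\<in>Orb. card {x\<in>C. f x = x})"
    using \<open>finite Orb\<close> disjoint by (intro card_UN_disjoint) (auto simp: Orb_def)
  moreover have "card C + card {x\<in>C. f x = x} = 2" if "C \<in> Orb" for C
    using that assms(3) by (auto simp: Orb_def card_insert_if) (simp add: Collect_conv_if)
  ultimately have "card X + card {x\<in>X. f x = x} = (\<Sum>C\<in>Orb. 2)"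
    by (simp add: sum.distrib[symmetric])
  then show ?thesis by (simp add: Orb_def)
qed

definition factors_len :: "'a list \<Rightarrow> nat \<Rightarrow> 'a list set" where
  "factors_len z k = {x. sublist x z \<and> length x = k}"

lemma finite_factors_len: "finite (factors_len z k)"
  unfolding factors_len_def using finite_sublists[of z] by (rule rev_finite_subset) blast

lemma factors_len_iff:
  "x \<in> factors_len z k \<longleftrightarrow> (\<exists>i. i + k \<le> length z \<and> x = take k (drop i z))"
proof
  assume "x \<in> factors_len z k"
  then obtain p q where "z = p @ x @ q" "length x = k"
    by (auto simp: factors_len_def sublist_def)
  then show "\<exists>i. i + k \<le> length z \<and> x = take k (drop i z)"
    by (intro exI[of _ "length p"]) simp
next
  assume "\<exists>i. i + k \<le> length z \<and> x = take k (drop i z)"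
  then show "x \<in> factors_len z k"
    by (auto simp: factors_len_def intro: sublist_order.order_trans[OF sublist_take sublist_drop])
qed

lemma rev_in_factors_len:
  "is_palindrome z \<Longrightarrow> x \<in> factors_len z k \<Longrightarrow> rev x \<in> factors_len z k"
  unfolding factors_len_def is_palindrome_def by (metis length_rev mem_Collect_eq sublist_rev)

lemma factors_len_length: "factors_len z (length z) = {z}"
proof -
  have "x = z" if "sublist x z" "length x = length z" for x
    using that by (auto simp: sublist_def)
  then show ?thesis by (auto simp: factors_len_def)
qed

lemma factors_len_0: "factors_len z 0 = {[]}"
  by (auto simp: factors_len_def)

definition card_pals :: "'a list set \<Rightarrow> nat" where
  "card_pals X = card {x\<in>X. is_palindrome x}"

definition T_sets :: "'a list set \<Rightarrow> 'a list set \<Rightarrow> int" where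
  "T_sets X Y = int (card Y) - int (card X) + 2 - int (card_pals Y) - int (card_pals X)"

definition rev_class :: "'a list \<Rightarrow> 'a list set" where
  "rev_class x = {x, rev x}"

lemma card_add_card_pals:
  assumes "finite X" "\<And>x. x \<in> X \<Longrightarrow> rev x \<in> X"
  shows "card X + card_pals X = 2 * card (rev_class ` X)"
  using card_add_card_fixpoints_involution[of X rev] assms
  by (simp add: card_pals_def is_palindrome_def rev_class_def[abs_def])

text \<open>\<open>T_sets X Y\<close> is twice the cyclomatic excess \<open>#edges - #vertices + 1\<close> of the graph whose
  vertices are the reversal classes in \<open>X\<close> and whose edges are the classes of non-palindromes
  in \<open>Y\<close>.\<close>
lemma T_sets_eq_classes:
  assumes "finite X" "finite Y" "\<And>x. x \<in> X \<Longrightarrow> rev x \<in> X" "\<And>y. y \<in> Y \<Longrightarrow> rev y \<in> Y"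
  shows "T_sets X Y = 2 * (int (card (rev_class ` {y\<in>Y. \<not> is_palindrome y}))
                          - int (card (rev_class ` X)) + 1)"
proof -
  let ?N = "{y\<in>Y. \<not> is_palindrome y}"
  have "card ?N + card_pals ?N = 2 * card (rev_class ` ?N)"
    using assms(2,4) by (intro card_add_card_pals) auto
  moreover have "card_pals ?N = 0"
    by (simp add: card_pals_def)
  moreover have "card Y = card ?N + card_pals Y"
    unfolding card_pals_def using assms(2)
    by (subst card_Un_disjoint[symmetric]) (auto intro: arg_cong[where f = card])
  ultimately show ?thesis
    using card_add_card_pals[OF assms(1,3)] by (simp add: T_sets_def)
qed

text \<open>An edge can serve only its endpoint of higher rank, so choosing one edge per vertex is
  injective.\<close>
lemma card_le_card_if_descending_edges:
  fixes ends :: "'e \<Rightarrow> 'v set" and d :: "'v \<Rightarrow> nat"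
  assumes "finite F" "\<And>c. c \<in> X \<Longrightarrow> \<exists>e\<in>F. \<exists>c'. ends e = {c, c'} \<and> d c' < d c"
  shows "card X \<le> card F"
proof -
  define edge where "edge c = (SOME e. e \<in> F \<and> (\<exists>c'. ends e = {c, c'} \<and> d c' < d c))" for c
  have edge: "edge c \<in> F \<and> (\<exists>c'. ends (edge c) = {c, c'} \<and> d c' < d c)" if "c \<in> X" for c
    unfolding edge_def by (rule someI_ex) (use assms(2)[OF that] in blast)
  have "inj_on edge X"
  proof (rule inj_onI)
    fix c1 c2 assume "c1 \<in> X" "c2 \<in> X" "edge c1 = edge c2"
    with edge obtain c1' c2' where "{c1, c1'} = {c2, c2'}" "d c1' < d c1" "d c2' < d c2"
      by metis
    then show "c1 = c2" by (auto simp: doubleton_eq_iff)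
  qed
  moreover have "edge ` X \<subseteq> F" using edge by blast
  ultimately show ?thesis using assms(1) by (rule card_inj_on_le)
qed

definition end_classes :: "'a list \<Rightarrow> 'a list set set" where
  "end_classes e = {rev_class (butlast e), rev_class (tl e)}"

lemma rev_class_rev [simp]: "rev_class (rev x) = rev_class x"
  by (auto simp: rev_class_def)

lemma end_classes_rev [simp]: "end_classes (rev e) = end_classes e"
proof -
  have "tl (rev e) = rev (butlast e)"
    using butlast_rev[of "rev e"] by simp
  then show ?thesis
    by (auto simp: end_classes_def butlast_rev)
qed

lemma end_classes_take_drop:
  assumes "k + Suc n \<le> length z"
  shows "end_classes (take (Suc n) (drop k z))
    = {rev_class (take n (drop k z)), rev_class (take n (drop (Suc k) z))}"
  using assms by (simp add: end_classes_def butlast_take tl_take drop_Suc tl_drop)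

text \<open>\<open>(s - i) + (i - s)\<close> is the distance \<open>|i - s|\<close> in truncated subtraction.\<close>
lemma step_towards:
  assumes "i + n \<le> length z" "s + n \<le> length z" "i \<noteq> s"
  obtains j where "j + n \<le> length z" "(s - j) + (j - s) < (s - i) + (i - s)"
    and "take (Suc n) (drop (min i j) z) \<in> factors_len z (Suc n)"
    and "end_classes (take (Suc n) (drop (min i j) z))
      = {rev_class (take n (drop i z)), rev_class (take n (drop j z))}"
proof (cases "i < s")
  case True
  then have "i + Suc n \<le> length z" using assms(2) by simp
  then show ?thesis
    using True by (intro that[of "Suc i"]) (auto simp: factors_len_iff end_classes_take_drop)
next
  case False
  then obtain k where k: "i = Suc k" "s \<le> k" using assms(3) by (cases i) auto
  then have "k + Suc n \<le> length z" using assms(1) by simp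
  then show ?thesis
    using k by (intro that[of k]) (auto simp: factors_len_iff end_classes_take_drop insert_commute)
qed

lemma Union_end_classes_rev_class [simp]: "\<Union>(end_classes ` rev_class e) = end_classes e"
  by (simp add: rev_class_def)

lemma rev_class_in_missing_edges:
  assumes "e \<in> factors_len z (Suc n)" "end_classes e = {c, c'}" "c \<noteq> c'" "c \<notin> rev_class ` B0"
    and "\<And>e. e \<in> B1 \<Longrightarrow> rev e \<in> B1" "\<And>e. e \<in> B1 \<Longrightarrow> butlast e \<in> B0 \<and> tl e \<in> B0"
  shows "rev_class e \<in> rev_class ` {e \<in> factors_len z (Suc n). \<not> is_palindrome e}
                         - rev_class ` {e \<in> B1. \<not> is_palindrome e}"
proof -
  have "e \<notin> B1"
  proof
    assume "e \<in> B1"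
    then have "end_classes e \<subseteq> rev_class ` B0"
      using assms(6) by (auto simp: end_classes_def)
    with assms(2,4) show False by auto
  qed
  moreover have "\<not> is_palindrome e"
  proof
    assume "is_palindrome e"
    then have "butlast e = rev (tl e)"
      by (metis butlast_rev is_palindrome_def)
    with assms(2,3) show False
      by (auto simp: end_classes_def doubleton_eq_iff)
  qed
  moreover have "e \<in> B1" if "rev_class e = rev_class e'" "e' \<in> B1" for e'
    using that assms(5) by (auto simp: rev_class_def doubleton_eq_iff)
  ultimately show ?thesis
    using assms(1) by blast
qed

text \<open>Rank each missing vertex class by the distance of its nearest occurrence in \<open>z\<close> to an
  occurrence of \<open>x0\<close>; one step towards \<open>x0\<close> is an edge outside \<open>B1\<close> leading to a class of
  lower rank.\<close>
lemma card_missing_vertices_le_card_missing_edges: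
  assumes "B0 \<subseteq> factors_len z n" "B1 \<subseteq> factors_len z (Suc n)" "\<And>e. e \<in> B1 \<Longrightarrow> rev e \<in> B1"
    and "\<And>e. e \<in> B1 \<Longrightarrow> butlast e \<in> B0 \<and> tl e \<in> B0" "x0 \<in> B0"
  shows "card (rev_class ` factors_len z n - rev_class ` B0)
    \<le> card (rev_class ` {e \<in> factors_len z (Suc n). \<not> is_palindrome e}
             - rev_class ` {e \<in> B1. \<not> is_palindrome e})" (is "_ \<le> card ?M")
proof -
  obtain s where s: "s + n \<le> length z" "x0 = take n (drop s z)"
    using assms(1,5) factors_len_iff by blast
  define fac where "fac i = take n (drop i z)" for i
  define dist where "dist i = (s - i) + (i - s)" for i
  define rank where "rank c = (LEAST k. \<exists>i. i + n \<le> length z \<and> rev_class (fac i) = c \<and> dist i = k)"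
    for c
  have rank_le: "rank (rev_class (fac i)) \<le> dist i" if "i + n \<le> length z" for i
    unfolding rank_def using that by (intro Least_le) blast
  show ?thesis
  proof (rule card_le_card_if_descending_edges[where ends = "\<lambda>E. \<Union>(end_classes ` E)" and d = rank])
    show "finite ?M"
      by (simp add: finite_factors_len)
  next
    fix c assume c: "c \<in> rev_class ` factors_len z n - rev_class ` B0"
    then obtain i0 where "i0 + n \<le> length z" "rev_class (fac i0) = c"
      by (auto simp: factors_len_iff fac_def)
    then have "\<exists>i. i + n \<le> length z \<and> rev_class (fac i) = c \<and> dist i = dist i0"
      by blast
    then have "\<exists>i. i + n \<le> length z \<and> rev_class (fac i) = c \<and> dist i = rank c"
      unfolding rank_def by (rule LeastI)
    then obtain i where i: "i + n \<le> length z" "rev_class (fac i) = c" "dist i = rank c"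
      by blast
    have "i \<noteq> s"
      using c i(2) s(2) assms(5) by (auto simp: fac_def)
    then obtain j where j: "j + n \<le> length z" "dist j < dist i"
      and e: "take (Suc n) (drop (min i j) z) \<in> factors_len z (Suc n)"
        "end_classes (take (Suc n) (drop (min i j) z)) = {c, rev_class (fac j)}"
      using step_towards[OF i(1) s(1) \<open>i \<noteq> s\<close>] i(2) unfolding dist_def fac_def by blast
    have less: "rank (rev_class (fac j)) < rank c"
      using rank_le[OF j(1)] j(2) i(3) by simp
    then have "c \<noteq> rev_class (fac j)"
      by blast
    moreover have "c \<notin> rev_class ` B0"
      using c by blast
    ultimately have edge: "rev_class (take (Suc n) (drop (min i j) z)) \<in> ?M"
      by (rule rev_class_in_missing_edges[OF e(1,2) _ _ assms(3,4)])
    show "\<exists>E\<in>?M. \<exists>c'. \<Union>(end_classes ` E) = {c, c'} \<and> rank c' < rank c"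
      using e(2) less by (intro bexI[OF _ edge]) auto
  qed
qed

definition T_word :: "'a list \<Rightarrow> nat \<Rightarrow> int" where
  "T_word z n = T_sets (factors_len z n) (factors_len z (Suc n))"

lemma T_sets_le_T_word:
  assumes "is_palindrome z" "B0 \<subseteq> factors_len z n" "B1 \<subseteq> factors_len z (Suc n)"
    and "\<And>x. x \<in> B0 \<Longrightarrow> rev x \<in> B0" "\<And>e. e \<in> B1 \<Longrightarrow> rev e \<in> B1"
    and "\<And>e. e \<in> B1 \<Longrightarrow> butlast e \<in> B0 \<and> tl e \<in> B0" "B0 \<noteq> {}"
  shows "T_sets B0 B1 \<le> T_word z n"
proof -
  let ?V = "rev_class ` factors_len z n" and ?W = "rev_class ` B0"
  let ?E = "rev_class ` {e \<in> factors_len z (Suc n). \<not> is_palindrome e}"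
  let ?F = "rev_class ` {e \<in> B1. \<not> is_palindrome e}"
  have finite: "finite B0" "finite B1"
    using assms(2,3) finite_factors_len finite_subset by blast+
  have "?W \<subseteq> ?V" "?F \<subseteq> ?E"
    using assms(2,3) by auto
  moreover have "finite ?V" "finite ?E"
    by (simp_all add: finite_factors_len)
  ultimately have "card (?V - ?W) = card ?V - card ?W" "card (?E - ?F) = card ?E - card ?F"
    and "card ?W \<le> card ?V" "card ?F \<le> card ?E"
    by (simp_all add: card_Diff_subset finite_subset card_mono)
  moreover have "card (?V - ?W) \<le> card (?E - ?F)"
    using assms(7) by (auto intro: card_missing_vertices_le_card_missing_edges[OF assms(2,3,5,6)])
  ultimately have "int (card ?F) - int (card ?W) \<le> int (card ?E) - int (card ?V)"
    by linarith
  moreover have "T_sets B0 B1 = 2 * (int (card ?F) - int (card ?W) + 1)"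
    using finite assms(4,5) by (rule T_sets_eq_classes)
  moreover have "T_word z n = 2 * (int (card ?E) - int (card ?V) + 1)"
    unfolding T_word_def using assms(1)
    by (intro T_sets_eq_classes) (auto simp: finite_factors_len rev_in_factors_len)
  ultimately show ?thesis by simp
qed

lemma T_word_nonneg:
  assumes "is_palindrome z" "n \<le> length z"
  shows "0 \<le> T_word z n"
proof -
  let ?x = "take n z"
  have "?x \<in> factors_len z n"
    using assms(2) by (auto simp: factors_len_def)
  moreover from this have "rev ?x \<in> factors_len z n"
    by (rule rev_in_factors_len[OF assms(1)])
  ultimately have "T_sets {?x, rev ?x} {} \<le> T_word z n"
    using assms(1) by (intro T_sets_le_T_word) auto
  moreover have "T_sets {?x, rev ?x} {} = 0"
    by (cases "rev ?x = ?x") (auto simp: T_sets_def card_pals_def is_palindrome_def Collect_conv_if)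
  ultimately show ?thesis by simp
qed

lemma T_word_mono:
  assumes "is_palindrome w" "is_palindrome z" "sublist w z" "n \<le> length w"
  shows "T_word w n \<le> T_word z n"
  unfolding T_word_def[of w]
proof (rule T_sets_le_T_word[OF assms(2)])
  show "factors_len w n \<subseteq> factors_len z n" "factors_len w (Suc n) \<subseteq> factors_len z (Suc n)"
    using assms(3) by (auto simp: factors_len_def intro: sublist_order.order_trans)
  show "factors_len w n \<noteq> {}"
    using assms(4) by (auto simp: factors_len_def intro!: exI[of _ "take n w"])
  show "\<And>e. e \<in> factors_len w (Suc n) \<Longrightarrow> butlast e \<in> factors_len w n \<and> tl e \<in> factors_len w n"
    by (auto simp: factors_len_def
        intro: sublist_order.order_trans[OF sublist_butlast] sublist_order.order_trans[OF sublist_tl])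
qed (simp_all add: rev_in_factors_len[OF assms(1)])

section \<open>Summing the complexities\<close>

lemma card_pal_factors_eq_sum:
  "card (pal_factors w) = (\<Sum>n<Suc (length w). card_pals (factors_len w n))"
proof -
  have "pal_factors w = (\<Union>n<Suc (length w). {x \<in> factors_len w n. is_palindrome x})"
    by (auto simp: pal_factors_def factors_len_def less_Suc_eq_le dest: sublist_length_le)
  also have "card \<dots> = (\<Sum>n<Suc (length w). card {x \<in> factors_len w n. is_palindrome x})"
    by (rule card_UN_disjoint) (simp, simp add: finite_factors_len, auto simp: factors_len_def)
  finally show ?thesis
    by (simp add: card_pals_def)
qed

lemma sum_T_word:
  assumes "is_palindrome w"
  shows "(\<Sum>n<length w. T_word w n) = 2 * defect_word w"
proof -
  define L where "L = length w"
  define C where "C n = int (card (factors_len w n))" for n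
  define P where "P n = int (card_pals (factors_len w n))" for n
  have "(\<Sum>n<L. T_word w n) = (\<Sum>n<L. C (Suc n) - C n) + 2 * int L - (\<Sum>n<L. P (Suc n) + P n)"
    by (simp add: T_word_def T_sets_def C_def P_def sum_subtractf sum.distrib algebra_simps)
  also have "(\<Sum>n<L. C (Suc n) - C n) = 0"
    by (simp only: sum_lessThan_telescope) (simp add: C_def L_def factors_len_length factors_len_0)
  also have "(\<Sum>n<L. P (Suc n) + P n) = 2 * (\<Sum>n<Suc L. P n) - P 0 - P L"
    using sum.lessThan_Suc_shift[of P L] sum.lessThan_Suc[of P L] by (simp add: sum.distrib)
  also have "(\<Sum>n<Suc L. P n) = int (card (pal_factors w))"
    by (simp add: P_def L_def card_pal_factors_eq_sum)
  also have "P 0 = 1"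
    by (simp add: P_def card_pals_def factors_len_0 is_palindrome_def Collect_conv_if)
  also have "P L = 1"
    using assms by (simp add: P_def L_def card_pals_def factors_len_length Collect_conv_if)
  finally show ?thesis
    by (simp add: defect_word_eq L_def)
qed

lemma T_fun_eq_T_word:
  assumes "z \<in> lang u" "\<And>x. x \<in> lang_n u n \<union> lang_n u (Suc n) \<Longrightarrow> sublist x z"
  shows "T_fun u n = T_word z n"
proof -
  have "factors_len z k = lang_n u k" if "k \<in> {n, Suc n}" for k
    using that assms by (auto simp: factors_len_def lang_n_def intro: sublist_in_lang)
  then show ?thesis
    by (simp add: T_fun_def T_word_def T_sets_def factor_complexity_def pal_complexity_def
        card_pals_def)
qed

lemma pal_factor_with_T_word_eq_T_fun:
  fixes u :: "nat \<Rightarrow> 'a::finite"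
  assumes "closed_under_reversal u" "defect u \<noteq> \<infinity>" "y \<in> lang u"
  obtains z where "is_palindrome z" "z \<in> lang u" "sublist y z" "K \<le> length z"
    and "\<And>n. n < K \<Longrightarrow> T_fun u n = T_word z n"
proof -
  let ?S = "insert y (\<Union>k\<le>K. lang_n u k)"
  have "finite ?S"
    by (simp add: finite_lang_n)
  moreover have "?S \<subseteq> lang u"
    using assms(3) by (auto simp: lang_n_def)
  ultimately obtain z where z: "is_palindrome z" "z \<in> lang u" "\<And>x. x \<in> ?S \<Longrightarrow> sublist x z"
    using finite_subset_lang_in_pal_factor[OF assms(1,2)] by blast
  have "pref u K \<in> ?S"
    by (simp add: lang_n_def pref_in_lang)
  then have "length (pref u K) \<le> length z"
    by (intro sublist_length_le z(3))
  then have "K \<le> length z"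
    by simp
  moreover have "T_fun u n = T_word z n" if "n < K" for n
  proof (rule T_fun_eq_T_word[OF z(2)])
    show "sublist x z" if "x \<in> lang_n u n \<union> lang_n u (Suc n)" for x
      using that \<open>n < K\<close> by (intro z(3)) auto
  qed
  moreover have "sublist y z"
    by (rule z(3)) simp
  ultimately show ?thesis
    using that z(1,2) by blast
qed

lemma T_fun_nonneg:
  fixes u :: "nat \<Rightarrow> 'a::finite"
  assumes "closed_under_reversal u" "defect u \<noteq> \<infinity>"
  shows "0 \<le> T_fun u n"
proof -
  obtain z where z: "is_palindrome z" "z \<in> lang u" "sublist (pref u 0) z" "Suc n \<le> length z"
    and T: "\<And>k. k < Suc n \<Longrightarrow> T_fun u k = T_word z k"
    by (rule pal_factor_with_T_word_eq_T_fun[OF assms pref_in_lang[of u 0], where K = "Suc n"]) blast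
  have "0 \<le> T_word z n"
    using z(1) Suc_leD[OF z(4)] by (rule T_word_nonneg)
  also have "T_word z n = T_fun u n"
    using T by simp
  finally show ?thesis .
qed

lemma sum_T_fun_le_defect:
  fixes u :: "nat \<Rightarrow> 'a::finite"
  assumes "closed_under_reversal u" "defect u \<noteq> \<infinity>"
  shows "(\<Sum>n<K. T_fun u n) \<le> 2 * int (the_enat (defect u))"
proof -
  obtain z where z: "is_palindrome z" "z \<in> lang u" "sublist (pref u 0) z" "K \<le> length z"
    and T: "\<And>n. n < K \<Longrightarrow> T_fun u n = T_word z n"
    by (rule pal_factor_with_T_word_eq_T_fun[OF assms pref_in_lang[of u 0], where K = K]) blast
  have "(\<Sum>n<K. T_fun u n) = (\<Sum>n<K. T_word z n)"
    using T by simp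
  also have "\<dots> \<le> (\<Sum>n<length z. T_word z n)"
    using z(4) by (intro sum_mono2) (auto intro: T_word_nonneg[OF z(1)])
  also have "\<dots> = 2 * defect_word z"
    using z(1) by (rule sum_T_word)
  also have "\<dots> \<le> 2 * int (the_enat (defect u))"
    using defect_word_le_defect[OF assms(2) z(2)] by simp
  finally show ?thesis .
qed

text \<open>A palindromic factor containing a prefix of maximal defect has itself maximal defect, and its
  \<open>T_word\<close> values are bounded by those of \<open>u\<close>.\<close>
lemma defect_le_sum_T_fun:
  fixes u :: "nat \<Rightarrow> 'a::finite"
  assumes "closed_under_reversal u" "defect u \<noteq> \<infinity>"
  obtains L where "2 * int (the_enat (defect u)) \<le> (\<Sum>n<L. T_fun u n)"
proof -
  obtain N where N: "int (the_enat (defect u)) = defect_word (pref u N)"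
    using defect_attained[OF assms(2)] by blast
  obtain w where w: "is_palindrome w" "w \<in> lang u" "sublist (pref u N) w"
    using factor_in_pal_factor[OF assms pref_in_lang] by blast
  have "int (the_enat (defect u)) = defect_word w"
    using N defect_word_sublist_mono[OF w(3)] defect_word_le_defect[OF assms(2) w(2)] by simp
  then have "2 * int (the_enat (defect u)) = (\<Sum>n<length w. T_word w n)"
    using sum_T_word[OF w(1)] by simp
  also have "\<dots> \<le> (\<Sum>n<length w. T_fun u n)"
  proof (rule sum_mono)
    fix n assume "n \<in> {..<length w}"
    moreover obtain z where "is_palindrome z" "z \<in> lang u" "sublist w z" "Suc n \<le> length z"
      and "\<And>k. k < Suc n \<Longrightarrow> T_fun u k = T_word z k"
      by (rule pal_factor_with_T_word_eq_T_fun[OF assms w(2), where K = "Suc n"]) blast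
    ultimately show "T_word w n \<le> T_fun u n"
      using T_word_mono[OF w(1)] by simp
  qed
  finally show ?thesis by (rule that)
qed

theorem theorem1:
  fixes u :: "nat \<Rightarrow> 'a::finite"
  assumes "closed_under_reversal u"
    and "defect u \<noteq> \<infinity>"
    and "summable (\<lambda>n. real_of_int (T_fun u n))"
  shows "2 * real (the_enat (defect u)) = (\<Sum>n. real_of_int (T_fun u n))"
proof (rule antisym)
  obtain L where "2 * int (the_enat (defect u)) \<le> (\<Sum>n<L. T_fun u n)"
    using defect_le_sum_T_fun[OF assms(1,2)] by blast
  then have "2 * real (the_enat (defect u)) \<le> (\<Sum>n<L. real_of_int (T_fun u n))"
    unfolding of_int_le_iff[where 'a = real, symmetric] by simp
  also have "\<dots> \<le> (\<Sum>n. real_of_int (T_fun u n))"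
    using assms(3) T_fun_nonneg[OF assms(1,2)] by (intro sum_le_suminf) auto
  finally show "2 * real (the_enat (defect u)) \<le> (\<Sum>n. real_of_int (T_fun u n))" .
next
  have "(\<Sum>n<K. real_of_int (T_fun u n)) \<le> 2 * real (the_enat (defect u))" for K
    using sum_T_fun_le_defect[OF assms(1,2), of K]
    unfolding of_int_le_iff[where 'a = real, symmetric] by simp
  then show "(\<Sum>n. real_of_int (T_fun u n)) \<le> 2 * real (the_enat (defect u))"
    using assms(3) by (intro suminf_le_const)
qed

end
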